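(* Let $(V_{cl},V_{op},m_{cl-op})$ be an open-closed field algebra. Then for every $u\in V_{cl}$ and $z\in\mathbb{H}$, as maps $V_{op}\to\overline{V_{op}}$, $$[D_{op},\mathbb{Y}_{cl-op}(u;z,\bar z)]=\mathbb{Y}_{cl-op}((D^L_{cl}+D^R_{cl})u;z,\bar z),$$ $$\mathbb{Y}_{cl-op}(D^L_{cl}u;z,\bar z)=\frac{\partial}{\partial z}\mathbb{Y}_{cl-op}(u;z,\bar z),\qquad \mathbb{Y}_{cl-op}(D^R_{cl}u;z,\bar z)=\frac{\partial}{\partial \bar z}\mathbb{Y}_{cl-op}(u;z,\bar z),$$ where $\partial/\partial z,\partial/\partial\bar z$ are the Wirtinger derivatives.
   Context: Notation: $\mathbb{H}=\{z\in\mathbb{C}:\mathrm{Im}\,z>0\}$; $\Lambda^n=\{(r_1,\dots,r_n)\in\mathbb{R}^n: r_1>\dots>r_n\ge 0\}$; $M^n_{\mathbb{H}}$ (resp. $M^n_{\mathbb{C}}$) is the set of $n$-tuples of pairwise distinct points of $\mathbb{H}$ (resp. $\mathbb{C}$). For a vector space $F=\oplus_{g\in G}F_{(g)}$ graded by an abelian group $G$, $\overline F=\prod_g F_{(g)}$, $P_g$ is the projection onto $F_{(g)}$, and $F'=\oplus_g F_{(g)}^*$. A ($\mathbb{R}\times\mathbb{R}$-graded) full field algebra is a vector space $V_{cl}=\oplus_{m,n\in\mathbb{R}}(V_{cl})_{(m,n)}$ with grading operators $\mathbf{d}^L_{cl},\mathbf{d}^R_{cl}$, operators $D^L_{cl},D^R_{cl}$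 of weights $(1,0),(0,1)$, and maps $m_{cl}^{(n)}:V_{cl}^{\otimes n}\times M^n_{\mathbb{C}}\to\overline{V_{cl}}$, written $m^{(n)}_{cl}(u_1,\dots,u_n;z_1,\bar z_1,\dots,z_n,\bar z_n)$, such that: $e^{2\pi i(\mathbf{d}^L_{cl}-\mathbf{d}^R_{cl})}=\mathrm{id}$; $m^{(n)}_{cl}$ is linear in the $u_j$ and smooth in the $z_j$; $m^{(1)}_{cl}(u;0,0)=u$ and $\mathbf{1}_{cl}:=m^{(0)}_{cl}(1)\in(V_{cl})_{(0,0)}$; (convergence) for $1\le i\le n$, $\sum_{p,q}m^{(n)}_{cl}(u_1,\dots,u_{i-1},P_{(p,q)}m^{(k)}_{cl}(\tilde u_1,\dots,\tilde u_k;w_1,\bar w_1,\dots,w_k,\bar w_k),u_{i+1},\dots,u_n;z_1,\bar z_1,\dots)$ converges absolutely, when $|w_p|<|z_i-z_j|$ for all $j\neq i$ and all $p$, to $m^{(n+k-1)}_{cl}$ at $(u_1,\dots,u_{i-1},\tilde u_1,\dots,\tilde u_k,u_{i+1},\dots,u_n)$ and points $z_1,\dots,z_{i-1},z_i+w_1,\dots,z_i+w_k,z_{i+1},\dots,z_n$; permutation invariance; for $a\in\mathbb{C}$, $e^{a\mathbf{d}^L_{cl}}e^{\bar a\mathbf{d}^R_{cl}}m^{(n)}_{cl}(u_j;z_j,\bar z_j)=m^{(n)}_{cl}(e^{a\mathbf{d}^L_{cl}}e^{\bar a\mathbf{d}^R_{cl}}u_j;e^az_j,e^{\bar a}\bar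 z_j)$; $[D^L_{cl},D^R_{cl}]=0$ and $e^{aD^L_{cl}}e^{\bar aD^R_{cl}}m^{(n)}_{cl}(u_j;z_j,\bar z_j)=m^{(n)}_{cl}(u_j;z_j+a,\bar z_j+\bar a)$. An open-closed field algebra $(V_{cl},V_{op},m_{cl-op})$ consists of a full field algebra $V_{cl}$, a vector space $V_{op}=\oplus_{n\in\mathbb{R}}(V_{op})_{(n)}$ with grading operator $\mathbf{d}_{op}$, an operator $D_{op}\in\mathrm{End}\,V_{op}$, and maps $m^{(l;n)}_{cl-op}:V_{cl}^{\otimes l}\otimes V_{op}^{\otimes n}\times M^l_{\mathbb{H}}\times\Lambda^n\to\overline{V_{op}}$, written $m^{(l;n)}_{cl-op}(u_1,\dots,u_l;v_1,\dots,v_n;z_1,\bar z_1,\dots,z_l,\bar z_l;r_1,\dots,r_n)$, such that: (1) linearity in vectors, smoothness in $r$'s, $z$'s; (2) $m^{(0;1)}_{cl-op}(v;0)=v$ and $\mathbf{1}_{op}:=m^{(0;0)}_{cl-op}(1)\in(V_{op})_{(0)}$; (3a) for $1\le i\le n$, $\sum_{s}m^{(l;n)}_{cl-op}(u_1,\dots,u_l;v_1,\dots,v_{i-1},P_s m^{(k;m)}_{cl-op}(\tilde u_1,\dots,\tilde u_k;\tilde v_1,\dots,\tilde v_m;w_1,\bar w_1,\dots;s_1,\dots,s_m),v_{i+1},\dots,v_n;z_j,\bar z_j;r_1,\dots,r_n)$ converges absolutely when $|z_j-r_i|,|r_t-r_i|>|w_p|,s_q\ge0$ ($t\ne i$) to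 $m^{(l+k;n+m-1)}_{cl-op}(u_1,\dots,u_l,\tilde u_1,\dots,\tilde u_k;v_1,\dots,v_{i-1},\tilde v_1,\dots,\tilde v_m,v_{i+1},\dots,v_n;z_j,\bar z_j,r_i+w_p,\overline{r_i+w_p};r_1,\dots,r_{i-1},r_i+s_1,\dots,r_i+s_m,r_{i+1},\dots,r_n)$; (3b) for $1\le i\le l$, $\sum_{p,q}m^{(l;n)}_{cl-op}(u_1,\dots,u_{i-1},P_{(p,q)}m^{(k)}_{cl}(\tilde u_1,\dots,\tilde u_k;w_1,\bar w_1,\dots),u_{i+1},\dots,u_l;v_t;z_j,\bar z_j;r_t)$ converges absolutely when $|z_j-z_i|,|r_t-z_i|>|w_p|$ ($j\ne i$) to $m^{(l+k-1;n)}_{cl-op}$ with closed vectors $u_1,\dots,u_{i-1},\tilde u_1,\dots,\tilde u_k,u_{i+1},\dots,u_l$ at points $z_1,\dots,z_{i-1},z_i+w_1,\dots,z_i+w_k,z_{i+1},\dots,z_l$; (4) invariance under simultaneous permutation of the $u_j$ and $z_j$; (5) for $a\in\mathbb{R}$, $e^{a\mathbf{d}_{op}}m^{(l;n)}_{cl-op}(u_j;v_t;z_j,\bar z_j;r_t)=m^{(l;n)}_{cl-op}(e^{a(\mathbf{d}^L_{cl}+\mathbf{d}^R_{cl})}u_j;e^{a\mathbf{d}_{op}}v_t;e^az_j,e^a\bar z_j;e^ar_t)$; (6) for $a\in\mathbb{R}$ with $r_n+a\ge0$, $e^{aD_{op}}m^{(l;n)}_{cl-op}(u_j;v_t;z_j,\bar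 z_j;r_t)=m^{(l;n)}_{cl-op}(u_j;v_t;z_j+a,\bar z_j+a;r_t+a)$. Define $\mathbb{Y}_{cl-op}(u;z,\bar z)v:=m^{(1;1)}_{cl-op}(u;v;z,\bar z;0)$ for $u\in V_{cl}$, $v\in V_{op}$, $z\in\mathbb{H}$. *)

theory Defs
  imports "HOL-Analysis.Analysis"
begin

text \<open>A complex vector space F (type 'v, scalar multiplication s) graded by an abelian
group 'g is encoded by the family of projections P g onto the homogeneous components
F_(g) = range (P g).  The completion (overline F) = prod_g F_(g) is encoded by functions
f :: 'g => 'v with f g in F_(g); the component P_g of f is f g.  The restricted dual
F' = oplus_g F_(g)^* is the set of linear functionals vanishing on all but finitely many
homogeneous components; it pairs with the completion.\<close>

definition graded_vs :: "(complex \<Rightarrow> 'v::ab_group_add \<Rightarrow> 'v) \<Rightarrow> ('g \<Rightarrow> 'v \<Rightarrow> 'v) \<Rightarrow> bool" where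
  "graded_vs s P \<longleftrightarrow>
     Vector_Spaces.vector_space s \<and>
     (\<forall>g. Vector_Spaces.linear s s (P g)) \<and>
     (\<forall>g h v. P g (P h v) = (if g = h then P g v else 0)) \<and>
     (\<forall>v. finite {g. P g v \<noteq> 0} \<and> v = (\<Sum>g\<in>{g. P g v \<noteq> 0}. P g v))"

definition in_cpl :: "('g \<Rightarrow> 'v \<Rightarrow> 'v) \<Rightarrow> ('g \<Rightarrow> 'v) \<Rightarrow> bool" where
  "in_cpl P f \<longleftrightarrow> (\<forall>g. f g \<in> range (P g))"

definition emb :: "('g \<Rightarrow> 'v \<Rightarrow> 'v) \<Rightarrow> 'v \<Rightarrow> ('g \<Rightarrow> 'v)" where
  "emb P v = (\<lambda>g. P g v)"

definition rdual :: "(complex \<Rightarrow> 'v::ab_group_add \<Rightarrow> 'v) \<Rightarrow> ('g \<Rightarrow> 'v \<Rightarrow> 'v) \<Rightarrow> ('v \<Rightarrow> complex) \<Rightarrow> bool" where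
  "rdual s P \<phi> \<longleftrightarrow> Vector_Spaces.linear s (*) \<phi> \<and> finite {g. \<exists>v. \<phi> (P g v) \<noteq> 0}"

definition pair :: "('g \<Rightarrow> 'v \<Rightarrow> 'v) \<Rightarrow> ('v \<Rightarrow> complex) \<Rightarrow> ('g \<Rightarrow> 'v) \<Rightarrow> complex" where
  "pair P \<phi> f = (\<Sum>g\<in>{g. \<exists>v. \<phi> (P g v) \<noteq> 0}. \<phi> (f g))"

text \<open>Graded scalar operator (e.g. e^{a d}) acting by the scalar c g on the component g,
on vectors and on the completion.\<close>

definition gscaleV :: "(complex \<Rightarrow> 'v::ab_group_add \<Rightarrow> 'v) \<Rightarrow> ('g \<Rightarrow> 'v \<Rightarrow> 'v) \<Rightarrow> ('g \<Rightarrow> complex) \<Rightarrow> 'v \<Rightarrow> 'v" where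
  "gscaleV s P c v = (\<Sum>g\<in>{g. P g v \<noteq> 0}. s (c g) (P g v))"

definition gscale :: "(complex \<Rightarrow> 'v \<Rightarrow> 'v) \<Rightarrow> ('g \<Rightarrow> complex) \<Rightarrow> ('g \<Rightarrow> 'v) \<Rightarrow> ('g \<Rightarrow> 'v)" where
  "gscale s c f = (\<lambda>g. s (c g) (f g))"

text \<open>Extensions to the completions of the operators D^L (weight (1,0)), D^R (weight (0,1))
and D_op (weight 1).\<close>

definition extL :: "('c \<Rightarrow> 'c) \<Rightarrow> (real \<times> real \<Rightarrow> 'c) \<Rightarrow> (real \<times> real \<Rightarrow> 'c)" where
  "extL D f = (\<lambda>(p, q). D (f (p - 1, q)))"

definition extR :: "('c \<Rightarrow> 'c) \<Rightarrow> (real \<times> real \<Rightarrow> 'c) \<Rightarrow> (real \<times> real \<Rightarrow> 'c)" where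
  "extR D f = (\<lambda>(p, q). D (f (p, q - 1)))"

definition extO :: "('o \<Rightarrow> 'o) \<Rightarrow> (real \<Rightarrow> 'o) \<Rightarrow> (real \<Rightarrow> 'o)" where
  "extO D f = (\<lambda>n. D (f (n - 1)))"

definition Mc :: "nat \<Rightarrow> complex list set" where
  "Mc n = {zs. length zs = n \<and> distinct zs}"

definition MH :: "nat \<Rightarrow> complex list set" where
  "MH n = {zs. zs \<in> Mc n \<and> (\<forall>z\<in>set zs. Im z > 0)}"

definition Lam :: "nat \<Rightarrow> real list set" where
  "Lam n = {rs. length rs = n \<and> sorted_wrt (>) rs \<and> (\<forall>r\<in>set rs. r \<ge> 0)}"

definition coords :: "complex list \<Rightarrow> real list" where
  "coords zs = concat (map (\<lambda>z. [Re z, Im z]) zs)"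

definition decode :: "real list \<Rightarrow> complex list" where
  "decode xs = map (\<lambda>j. Complex (xs ! (2 * j)) (xs ! (2 * j + 1))) [0..<length xs div 2]"

definition lcont :: "real list set \<Rightarrow> (real list \<Rightarrow> complex) \<Rightarrow> bool" where
  "lcont S F \<longleftrightarrow> (\<forall>xs\<in>S. \<forall>e>0. \<exists>d>0. \<forall>ys\<in>S.
      (length ys = length xs \<and> (\<forall>j<length xs. \<bar>ys ! j - xs ! j\<bar> < d)) \<longrightarrow> cmod (F ys - F xs) < e)"

definition pdir :: "real list set \<Rightarrow> nat \<Rightarrow> (real list \<Rightarrow> complex) \<Rightarrow> real list \<Rightarrow> complex" where
  "pdir S j F xs = vector_derivative (\<lambda>t. F (xs[j := xs ! j + t]))
      (at 0 within {t. xs[j := xs ! j + t] \<in> S})"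

fun Ck :: "nat \<Rightarrow> real list set \<Rightarrow> (real list \<Rightarrow> complex) \<Rightarrow> bool" where
  "Ck 0 S F = lcont S F"
| "Ck (Suc k) S F = (lcont S F \<and>
      (\<forall>xs\<in>S. \<forall>j<length xs. (\<lambda>t. F (xs[j := xs ! j + t])) differentiable
            (at 0 within {t. xs[j := xs ! j + t] \<in> S})) \<and>
      (\<forall>j. Ck k S (pdir S j F)))"

definition smooth :: "real list set \<Rightarrow> (real list \<Rightarrow> complex) \<Rightarrow> bool" where
  "smooth S F \<longleftrightarrow> (\<forall>k. Ck k S F)"

definition permute_list :: "(nat \<Rightarrow> nat) \<Rightarrow> 'a list \<Rightarrow> 'a list" where
  "permute_list p xs = map (\<lambda>j. xs ! p j) [0..<length xs]"

definition full_field_algebra ::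
  "(complex \<Rightarrow> 'c::ab_group_add \<Rightarrow> 'c) \<Rightarrow> (real \<times> real \<Rightarrow> 'c \<Rightarrow> 'c) \<Rightarrow> ('c \<Rightarrow> 'c) \<Rightarrow> ('c \<Rightarrow> 'c)
   \<Rightarrow> ('c list \<Rightarrow> complex list \<Rightarrow> real \<times> real \<Rightarrow> 'c) \<Rightarrow> bool" where
  "full_field_algebra s P DL DR m \<longleftrightarrow>
     graded_vs s P \<and>
     \<comment> \<open>e^{2 pi i (d^L - d^R)} = id\<close>
     (\<forall>p q. (\<exists>v. P (p, q) v \<noteq> 0) \<longrightarrow> p - q \<in> \<int>) \<and>
     \<comment> \<open>D^L, D^R linear of weights (1,0), (0,1)\<close>
     Vector_Spaces.linear s s DL \<and> Vector_Spaces.linear s s DR \<and>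
     (\<forall>p q v. DL (P (p, q) v) \<in> range (P (p + 1, q)) \<and> DR (P (p, q) v) \<in> range (P (p, q + 1))) \<and>
     \<comment> \<open>values in the completion\<close>
     (\<forall>us zs. zs \<in> Mc (length us) \<longrightarrow> in_cpl P (m us zs)) \<and>
     \<comment> \<open>linearity in each u_j\<close>
     (\<forall>us zs i g. zs \<in> Mc (length us) \<longrightarrow> i < length us \<longrightarrow>
        Vector_Spaces.linear s s (\<lambda>u. m (us[i := u]) zs g)) \<and>
     \<comment> \<open>smoothness in the z_j (weakly, i.e. of all matrix coefficients)\<close>
     (\<forall>n us \<phi>. length us = n \<longrightarrow> rdual s P \<phi> \<longrightarrow>
        smooth (coords ` Mc n) (\<lambda>xs. pair P \<phi> (m us (decode xs)))) \<and>
     \<comment> \<open>identity and vacuum\<close>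
     (\<forall>u. m [u] [0] = emb P u) \<and>
     (\<exists>one. one \<in> range (P (0, 0)) \<and> m [] [] = emb P one) \<and>
     \<comment> \<open>convergence / associativity\<close>
     (\<forall>us zs vs ws i \<phi>. zs \<in> Mc (length us) \<longrightarrow> ws \<in> Mc (length vs) \<longrightarrow> i < length us \<longrightarrow>
        (\<forall>j<length zs. j \<noteq> i \<longrightarrow> (\<forall>w\<in>set ws. cmod w < cmod (zs ! i - zs ! j))) \<longrightarrow>
        rdual s P \<phi> \<longrightarrow>
        ((\<lambda>pq. pair P \<phi> (m (us[i := m vs ws pq]) zs)) has_sum
           pair P \<phi> (m (take i us @ vs @ drop (Suc i) us)
                         (take i zs @ map (\<lambda>w. zs ! i + w) ws @ drop (Suc i) zs))) UNIV) \<and>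
     \<comment> \<open>permutation invariance\<close>
     (\<forall>us zs p. zs \<in> Mc (length us) \<longrightarrow> bij_betw p {..<length us} {..<length us} \<longrightarrow>
        m (permute_list p us) (permute_list p zs) = m us zs) \<and>
     \<comment> \<open>scaling by e^{a d^L} e^{conj(a) d^R}\<close>
     (\<forall>a::complex. \<forall>us zs. zs \<in> Mc (length us) \<longrightarrow>
        gscale s (\<lambda>(p, q). exp (a * of_real p) * exp (cnj a * of_real q)) (m us zs) =
        m (map (gscaleV s P (\<lambda>(p, q). exp (a * of_real p) * exp (cnj a * of_real q))) us)
          (map (\<lambda>z. exp a * z) zs)) \<and>
     \<comment> \<open>translation by e^{a D^L} e^{conj(a) D^R}\<close>
     (\<forall>v. DL (DR v) = DR (DL v)) \<and>
     (\<forall>a::complex. \<forall>us zs \<phi>. zs \<in> Mc (length us) \<longrightarrow> rdual s P \<phi> \<longrightarrow>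
        ((\<lambda>(k, l). a ^ k * cnj a ^ l / (fact k * fact l) *
              pair P \<phi> ((extL DL ^^ k) ((extR DR ^^ l) (m us zs)))) has_sum
           pair P \<phi> (m us (map (\<lambda>z. z + a) zs))) (UNIV :: (nat \<times> nat) set))"

definition open_closed_field_algebra ::
  "(complex \<Rightarrow> 'c::ab_group_add \<Rightarrow> 'c) \<Rightarrow> (real \<times> real \<Rightarrow> 'c \<Rightarrow> 'c) \<Rightarrow> ('c \<Rightarrow> 'c) \<Rightarrow> ('c \<Rightarrow> 'c)
   \<Rightarrow> ('c list \<Rightarrow> complex list \<Rightarrow> real \<times> real \<Rightarrow> 'c)
   \<Rightarrow> (complex \<Rightarrow> 'o::ab_group_add \<Rightarrow> 'o) \<Rightarrow> (real \<Rightarrow> 'o \<Rightarrow> 'o) \<Rightarrow> ('o \<Rightarrow> 'o)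
   \<Rightarrow> ('c list \<Rightarrow> 'o list \<Rightarrow> complex list \<Rightarrow> real list \<Rightarrow> real \<Rightarrow> 'o) \<Rightarrow> bool" where
  "open_closed_field_algebra sc Pc DL DR mcl so Po D m \<longleftrightarrow>
     full_field_algebra sc Pc DL DR mcl \<and>
     graded_vs so Po \<and>
     \<comment> \<open>D_op linear of weight 1 (so that it acts on the completion)\<close>
     Vector_Spaces.linear so so D \<and>
     (\<forall>n v. D (Po n v) \<in> range (Po (n + 1))) \<and>
     \<comment> \<open>values in the completion\<close>
     (\<forall>us vs zs rs. zs \<in> MH (length us) \<longrightarrow> rs \<in> Lam (length vs) \<longrightarrow> in_cpl Po (m us vs zs rs)) \<and>
     \<comment> \<open>(1) linearity in the vectors\<close>
     (\<forall>us vs zs rs i g. zs \<in> MH (length us) \<longrightarrow> rs \<in> Lam (length vs) \<longrightarrow>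
        (i < length us \<longrightarrow> Vector_Spaces.linear sc so (\<lambda>u. m (us[i := u]) vs zs rs g)) \<and>
        (i < length vs \<longrightarrow> Vector_Spaces.linear so so (\<lambda>v. m us (vs[i := v]) zs rs g))) \<and>
     \<comment> \<open>(1) smoothness in the z_j and r_t (weakly)\<close>
     (\<forall>us vs \<phi>. rdual so Po \<phi> \<longrightarrow>
        smooth {coords zs @ rs | zs rs. zs \<in> MH (length us) \<and> rs \<in> Lam (length vs)}
          (\<lambda>xs. pair Po \<phi> (m us vs (decode (take (2 * length us) xs)) (drop (2 * length us) xs)))) \<and>
     \<comment> \<open>(2)\<close>
     (\<forall>v. m [] [v] [] [0] = emb Po v) \<and>
     (\<exists>one. one \<in> range (Po 0) \<and> m [] [] [] [] = emb Po one) \<and>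
     \<comment> \<open>(3a)\<close>
     (\<forall>us vs zs rs us' vs' ws ss i \<phi>.
        zs \<in> MH (length us) \<longrightarrow> rs \<in> Lam (length vs) \<longrightarrow>
        ws \<in> MH (length us') \<longrightarrow> ss \<in> Lam (length vs') \<longrightarrow> i < length vs \<longrightarrow>
        (\<forall>z\<in>set zs. (\<forall>w\<in>set ws. cmod w < cmod (z - of_real (rs ! i))) \<and>
                    (\<forall>s\<in>set ss. s < cmod (z - of_real (rs ! i)))) \<longrightarrow>
        (\<forall>t<length rs. t \<noteq> i \<longrightarrow> (\<forall>w\<in>set ws. cmod w < \<bar>rs ! t - rs ! i\<bar>) \<and>
                                   (\<forall>s\<in>set ss. s < \<bar>rs ! t - rs ! i\<bar>)) \<longrightarrow>
        rdual so Po \<phi> \<longrightarrow>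
        ((\<lambda>n. pair Po \<phi> (m us (vs[i := m us' vs' ws ss n]) zs rs)) has_sum
           pair Po \<phi> (m (us @ us') (take i vs @ vs' @ drop (Suc i) vs)
                          (zs @ map (\<lambda>w. of_real (rs ! i) + w) ws)
                          (take i rs @ map (\<lambda>s. rs ! i + s) ss @ drop (Suc i) rs))) UNIV) \<and>
     \<comment> \<open>(3b)\<close>
     (\<forall>us vs zs rs us' ws i \<phi>.
        zs \<in> MH (length us) \<longrightarrow> rs \<in> Lam (length vs) \<longrightarrow>
        ws \<in> Mc (length us') \<longrightarrow> i < length us \<longrightarrow>
        (\<forall>j<length zs. j \<noteq> i \<longrightarrow> (\<forall>w\<in>set ws. cmod w < cmod (zs ! j - zs ! i))) \<longrightarrow>
        (\<forall>r\<in>set rs. \<forall>w\<in>set ws. cmod w < cmod (of_real r - zs ! i)) \<longrightarrow>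
        (\<forall>w\<in>set ws. Im (zs ! i + w) > 0) \<longrightarrow>
        rdual so Po \<phi> \<longrightarrow>
        ((\<lambda>pq. pair Po \<phi> (m (us[i := mcl us' ws pq]) vs zs rs)) has_sum
           pair Po \<phi> (m (take i us @ us' @ drop (Suc i) us) vs
                          (take i zs @ map (\<lambda>w. zs ! i + w) ws @ drop (Suc i) zs) rs)) UNIV) \<and>
     \<comment> \<open>(4)\<close>
     (\<forall>us vs zs rs p. zs \<in> MH (length us) \<longrightarrow> rs \<in> Lam (length vs) \<longrightarrow>
        bij_betw p {..<length us} {..<length us} \<longrightarrow>
        m (permute_list p us) vs (permute_list p zs) rs = m us vs zs rs) \<and>
     \<comment> \<open>(5)\<close>
     (\<forall>a::real. \<forall>us vs zs rs. zs \<in> MH (length us) \<longrightarrow> rs \<in> Lam (length vs) \<longrightarrow>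
        gscale so (\<lambda>n. of_real (exp (a * n))) (m us vs zs rs) =
        m (map (gscaleV sc Pc (\<lambda>(p, q). of_real (exp (a * (p + q))))) us)
          (map (gscaleV so Po (\<lambda>n. of_real (exp (a * n)))) vs)
          (map (\<lambda>z. of_real (exp a) * z) zs) (map (\<lambda>r. exp a * r) rs)) \<and>
     \<comment> \<open>(6)\<close>
     (\<forall>a::real. \<forall>us vs zs rs \<phi>. zs \<in> MH (length us) \<longrightarrow> rs \<in> Lam (length vs) \<longrightarrow>
        (rs = [] \<or> last rs + a \<ge> 0) \<longrightarrow> rdual so Po \<phi> \<longrightarrow>
        ((\<lambda>k. of_real (a ^ k / fact k) * pair Po \<phi> ((extO D ^^ k) (m us vs zs rs))) has_sum
           pair Po \<phi> (m us vs (map (\<lambda>z. z + of_real a) zs) (map (\<lambda>r. r + a) rs))) UNIV)"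

text \<open>The vertex operator Y_{cl-op}(u; z, conj z) v = m^{(1;1)}(u; v; z, conj z; 0).\<close>

definition Ycl_op :: "('c list \<Rightarrow> 'o list \<Rightarrow> complex list \<Rightarrow> real list \<Rightarrow> real \<Rightarrow> 'o)
   \<Rightarrow> 'c \<Rightarrow> complex \<Rightarrow> 'o \<Rightarrow> real \<Rightarrow> 'o" where
  "Ycl_op m u z v = m [u] [v] [z] [0]"

end

(* Both identities are proved weakly, after pairing with elements phi of the restricted dual;
   functionals supported on a single homogeneous component separate points, which turns the
   weak commutator formula into an identity in the completion.

   For homogeneous u, axiom (3b) together with the translation property of the closed algebra
   expands <phi, m(u; v; z + w; 0)> as the double series
     sum_{k,l} w^k conj(w)^l / (k! l!) <phi, m(D_L^k D_R^l u; v; z; 0)>,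
   whose derivatives along the real and the imaginary direction are
   <phi, Y(D_L u)> + <phi, Y(D_R u)> and i <phi, Y(D_L u)> - i <phi, Y(D_R u)>;
   solving for the two terms gives the Wirtinger derivatives.

   For the commutator, axiom (6) shows that a |-> <phi, m(u; v; z + a; a)> has right derivative
   <phi, D_op Y(u; z) v> at 0, while (3a) combined with (6) for the open vertex alone shows that
   a |-> <phi, m(u; v; z; a)> has right derivative <phi, Y(u; z) D_op v>.  Their difference only
   moves the closed point along the real axis, so by the continuity of the partial derivative
   granted by smoothness its right derivative is <phi, Y((D_L + D_R) u; z) v>. *)

theory Submission
  imports Defs
begin

section \<open>Series and one-sided derivatives on the real line\<close>

lemma has_vector_derivative_power_series:
  fixes c :: "nat \<Rightarrow> 'a::{real_normed_field,banach}" and F :: "real \<Rightarrow> 'a"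
  assumes d: "d > 0" and S: "0 \<in> S" "d / 2 \<in> S"
    and sums: "\<And>t. t \<in> S \<Longrightarrow> \<bar>t\<bar> < d \<Longrightarrow> ((\<lambda>k. c k * of_real t ^ k) has_sum F t) UNIV"
  shows "(F has_vector_derivative c 1) (at 0 within S)"
proof -
  have F_eq: "F t = (\<Sum>k. c k * of_real t ^ k)" if "t \<in> S" "\<bar>t\<bar> < d" for t
    using sums_unique[OF has_sum_imp_sums[OF sums[OF that]]] .
  have "summable (\<lambda>k. c k * of_real (d / 2) ^ k)"
    using sums[OF S(2)] d by (intro summable_on_imp_summable) (auto simp: summable_on_def)
  then have "DERIV (\<lambda>x. \<Sum>k. c k * x ^ k) 0 :> (\<Sum>k. diffs c k * 0 ^ k)"
    by (rule termdiffs_strong) (use d in simp)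
  moreover have "(\<Sum>k. diffs c k * (0::'a) ^ k) = c 1"
    using powser_zero[of "diffs c"] by (simp add: diffs_def)
  ultimately have "((\<lambda>t. \<Sum>k. c k * of_real t ^ k) has_vector_derivative c 1) (at 0 within S)"
    using has_vector_derivative_real_field[of _ _ 0] by simp
  then show ?thesis
    by (rule has_vector_derivative_transform_within[OF _ d S(1)]) (simp add: F_eq)
qed

lemma has_vector_derivative_double_power_series:
  fixes a :: "nat \<Rightarrow> nat \<Rightarrow> 'a::{real_normed_field,banach}" and F :: "real \<Rightarrow> 'a"
  assumes d: "d > 0"
    and sums: "\<And>t. \<bar>t\<bar> < d \<Longrightarrow> ((\<lambda>(k, l). a k l * of_real t ^ (k + l)) has_sum F t) UNIV"
  shows "(F has_vector_derivative a 1 0 + a 0 1) (at 0)"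
proof -
  define b where "b N = (\<Sum>k\<le>N. a k (N - k))" for N
  have "((\<lambda>N. b N * of_real t ^ N) has_sum F t) UNIV" if t: "\<bar>t\<bar> < d" for t
  proof (rule has_sum_SigmaD)
    have bij: "bij_betw (\<lambda>(N::nat, k::nat). (k, N - k)) (SIGMA N:UNIV. {..N}) UNIV"
      by (rule bij_betw_byWitness[where f' = "\<lambda>(k::nat, l::nat). (k + l, k)"])
        (auto simp: image_def intro!: exI[where x = "(_ + _, _)"])
    have "((\<lambda>x. (\<lambda>(k, l). a k l * of_real t ^ (k + l)) ((\<lambda>(N, k). (k, N - k)) x)) has_sum F t)
            (SIGMA N:UNIV. {..N})"
      by (rule has_sum_reindex_bij_betw[OF bij, THEN iffD2, OF sums[OF t]])
    then show "((\<lambda>(N, k). a k (N - k) * of_real t ^ N) has_sum F t) (SIGMA N:UNIV. {..N})"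
      by (rule has_sum_cong[THEN iffD1, rotated]) auto
  qed (auto simp: b_def sum_distrib_right intro: has_sum_finiteI)
  then have "(F has_vector_derivative b 1) (at 0 within UNIV)"
    by (intro has_vector_derivative_power_series[OF d]) auto
  then show ?thesis by (simp add: b_def add.commute)
qed

lemma has_sum_reindex_single_support:
  fixes c :: "'g \<Rightarrow> 'i \<Rightarrow> 'b::{topological_comm_monoid_add,t2_space}"
  assumes "inj j"
    and series: "\<And>g. (c g has_sum F g) UNIV"
    and single: "\<And>g i. g \<noteq> j i \<Longrightarrow> c g i = 0"
    and sum: "(F has_sum X) UNIV"
  shows "((\<lambda>i. c (j i) i) has_sum X) UNIV"
proof -
  have "c (j i) x = 0" if "x \<noteq> i" for i x
    using single[of "j i" x] that by (simp add: inj_eq[OF \<open>inj j\<close>])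
  then have "(c (j i) has_sum F (j i)) {i}" for i
    using series[of "j i"] by (subst has_sum_cong_neutral[where T = UNIV and g = "c (j i)"]) auto
  then have on_range: "F (j i) = c (j i) i" for i
    by (simp add: has_sum_finite_iff)
  have "F g = 0" if "g \<notin> range j" for g
    using has_sum_unique[OF series has_sum_0] single that by blast
  with sum have "(F has_sum X) (range j)"
    by (subst has_sum_cong_neutral[where T = UNIV and g = F]) auto
  then have "((F \<circ> j) has_sum X) UNIV"
    using has_sum_reindex[OF \<open>inj j\<close>] by blast
  then show ?thesis
    by (simp add: o_def on_range)
qed

lemma has_vector_derivative_at_from_shift:
  fixes f :: "real \<Rightarrow> 'a::real_normed_vector"
  assumes "((\<lambda>t. f (x + t)) has_vector_derivative f') (at 0)"
  shows "(f has_vector_derivative f') (at x)"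
proof -
  have "((\<lambda>s. s - x) has_vector_derivative 1) (at x)"
    by (auto intro!: derivative_eq_intros)
  from vector_diff_chain_at[OF this] assms have "((\<lambda>t. f (x + t)) \<circ> (\<lambda>s. s - x) has_vector_derivative f') (at x)"
    by simp
  then show ?thesis
    by (simp add: o_def)
qed

lemma has_vector_derivative_diagonal_increment:
  fixes g g' :: "real \<Rightarrow> real \<Rightarrow> 'a::real_normed_vector"
  assumes deriv: "\<And>s a. 0 \<le> a \<Longrightarrow> ((\<lambda>t. g (s + t) a) has_vector_derivative g' s a) (at 0)"
    and cont: "\<And>e. 0 < e \<Longrightarrow> \<exists>d>0. \<forall>s a. 0 \<le> a \<longrightarrow> \<bar>s - s0\<bar> < d \<longrightarrow> a < d \<longrightarrow>
                   norm (g' s a - g' s0 0) \<le> e"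
  shows "((\<lambda>a. g (s0 + a) a - g s0 a) has_vector_derivative g' s0 0) (at 0 within {0..})"
  unfolding has_vector_derivative_def has_derivative_within_alt
proof (intro conjI allI impI bounded_linear_scaleR_left)
  fix e :: real assume "e > 0"
  then obtain d where d: "d > 0"
    and near: "\<And>s a. 0 \<le> a \<Longrightarrow> \<bar>s - s0\<bar> < d \<Longrightarrow> a < d \<Longrightarrow> norm (g' s a - g' s0 0) \<le> e"
    using cont by blast
  have "norm (g (s0 + a) a - g s0 a - a *\<^sub>R g' s0 0) \<le> e * a" if a: "0 \<le> a" "a < d" for a
  proof -
    define h where "h s = g s a - s *\<^sub>R g' s0 0" for s
    have "(h has_vector_derivative g' s a - g' s0 0) (at s)" for s
      unfolding h_def using has_vector_derivative_at_from_shift[OF deriv[OF a(1)]]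
      by (auto intro!: derivative_eq_intros)
    then have "(h has_derivative (\<lambda>t. t *\<^sub>R (g' s a - g' s0 0))) (at s within {s0..s0 + a})" for s
      unfolding has_vector_derivative_def by (rule has_derivative_at_withinI)
    moreover have "onorm (\<lambda>t. t *\<^sub>R (g' s a - g' s0 0)) \<le> e" if "s \<in> {s0..s0 + a}" for s
      using onorm_scaleR_left[OF bounded_linear_ident, of "g' s a - g' s0 0"] onorm_id[where 'a=real]
        near[of a s] that a by simp
    ultimately have "norm (h (s0 + a) - h s0) \<le> e * norm (s0 + a - s0)"
      by (intro differentiable_bound[OF convex_real_interval(5)]) (use a in auto)
    then show ?thesis
      using a by (simp add: h_def algebra_simps)
  qed
  with d show "\<exists>d>0. \<forall>a\<in>{0..}. norm (a - 0) < d \<longrightarrow>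
      norm (g (s0 + a) a - g s0 a - (g (s0 + 0) 0 - g s0 0) - (a - 0) *\<^sub>R g' s0 0) \<le> e * norm (a - 0)"
    by (intro exI[of _ d]) simp
qed

section \<open>Linear functionals\<close>

lemmas linear_map_zero = module_hom.zero[OF module_hom_linearI]
lemmas linear_map_add = module_hom.add[OF module_hom_linearI]
lemmas linear_map_diff = module_hom.diff[OF module_hom_linearI]
lemmas linear_map_sum = module_hom.sum[OF module_hom_linearI]

lemma linear_map_funpow_zero: "Vector_Spaces.linear s s f \<Longrightarrow> (f ^^ k) 0 = 0"
  by (induction k) (simp_all add: linear_map_zero)

lemma eq_if_linear_functionals_eq:
  fixes s :: "'a::field \<Rightarrow> 'v::ab_group_add \<Rightarrow> 'v"
  assumes vs: "Vector_Spaces.vector_space s"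
    and eq: "\<And>\<psi>. Vector_Spaces.linear s (*) \<psi> \<Longrightarrow> \<psi> x = \<psi> y"
  shows "x = y"
proof (rule ccontr)
  assume "x \<noteq> y"
  interpret vector_space_pair s "(*) :: 'a \<Rightarrow> 'a \<Rightarrow> 'a"
    using vs vector_space_over_itself.vector_space_axioms by (simp add: vector_space_pair_def)
  have "vs1.independent {x - y}"
    using \<open>x \<noteq> y\<close> vs1.independent_insertI[of "x - y" "{}"] vs1.span_empty by auto
  then have lin: "Vector_Spaces.linear s (*) (construct {x - y} (\<lambda>_. 1))"
    and one: "construct {x - y} (\<lambda>_. 1) (x - y) = 1"
    by (auto intro: linear_construct construct_basis)
  have "construct {x - y} (\<lambda>_. 1) (x - y) = 0"
    using linear_map_diff[OF lin] eq[OF lin] by simp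
  with one show False by simp
qed

lemma linear_pair:
  assumes "rdual s P \<phi>" and "\<And>g. Vector_Spaces.linear s1 s (\<lambda>x. F x g)"
  shows "Vector_Spaces.linear s1 (*) (\<lambda>x. pair P \<phi> (F x))"
proof -
  interpret vector_space_pair s1 "(*) :: complex \<Rightarrow> complex \<Rightarrow> complex"
    using assms(2) vector_space_over_itself.vector_space_axioms
    by (simp add: vector_space_pair_def Vector_Spaces.linear_iff)
  have "Vector_Spaces.linear s (*) \<phi>"
    using assms(1) by (simp add: rdual_def)
  then have "Vector_Spaces.linear s1 (*) (\<lambda>x. \<phi> (F x g))" for g
    using Vector_Spaces.linear_compose[OF assms(2)] by (simp add: o_def)
  then show ?thesis
    unfolding pair_def by (intro linear_compose_sum) blast
qed

section \<open>Graded spaces and their completions\<close>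

context
  fixes s :: "complex \<Rightarrow> 'v::ab_group_add \<Rightarrow> 'v" and P :: "'g \<Rightarrow> 'v \<Rightarrow> 'v"
  assumes graded: "graded_vs s P"
begin

lemma graded_vs_vector_space: "Vector_Spaces.vector_space s"
  using graded unfolding graded_vs_def by blast

lemma graded_vs_linear_proj: "Vector_Spaces.linear s s (P g)"
  using graded unfolding graded_vs_def by blast

lemma graded_vs_decomp: "finite {g. P g v \<noteq> 0} \<and> v = (\<Sum>g | P g v \<noteq> 0. P g v)"
  using graded unfolding graded_vs_def by blast

lemma proj_proj: "P g (P h v) = (if g = h then P g v else 0)"
  using graded unfolding graded_vs_def by blast

lemma proj_homogeneous: "x \<in> range (P h) \<Longrightarrow> P g x = (if g = h then x else 0)"
  using proj_proj by auto

lemma rdual_proj_comp: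
  assumes "Vector_Spaces.linear s (*) \<psi>"
  shows "rdual s P (\<lambda>x. \<psi> (P g x))"
proof -
  have "{h. \<exists>v. \<psi> (P g (P h v)) \<noteq> 0} \<subseteq> {g}"
    using proj_proj linear_map_zero[OF assms] by auto
  then show ?thesis
    unfolding rdual_def using Vector_Spaces.linear_compose[OF graded_vs_linear_proj assms]
    by (auto simp: o_def intro: finite_subset)
qed

lemma pair_proj_comp:
  assumes "Vector_Spaces.linear s (*) \<psi>" and "in_cpl P f"
  shows "pair P (\<lambda>x. \<psi> (P g x)) f = \<psi> (f g)"
proof -
  let ?H = "{h. \<exists>v. \<psi> (P g (P h v)) \<noteq> 0}"
  have fg: "P g (f g) = f g"
    using assms(2) proj_homogeneous[of "f g" g g] unfolding in_cpl_def by simp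
  have "?H \<subseteq> {g}"
    using proj_proj linear_map_zero[OF assms(1)] by auto
  moreover have "\<psi> (P g (f g)) = 0" if "g \<notin> ?H"
  proof -
    from that have "\<psi> (P g (P g (f g))) = 0" by blast
    then show ?thesis by (simp only: fg)
  qed
  ultimately have "pair P (\<lambda>x. \<psi> (P g x)) f = (\<Sum>h\<in>{g}. \<psi> (P g (f h)))"
    unfolding pair_def by (intro sum.mono_neutral_left) auto
  then show ?thesis
    by (simp add: fg)
qed

lemma has_vector_derivative_by_homogeneous_components:
  fixes F :: "'v \<Rightarrow> real \<Rightarrow> complex"
  assumes d: "d > 0" and S: "0 \<in> S"
    and lin: "\<And>t. t \<in> S \<Longrightarrow> \<bar>t\<bar> < d \<Longrightarrow> Vector_Spaces.linear s (*) (\<lambda>x. F x t)"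
    and add: "\<And>x y. G (x + y) = G x + G y"
    and hom: "\<And>g. (F (P g u) has_vector_derivative G (P g u)) (at 0 within S)"
  shows "(F u has_vector_derivative G u) (at 0 within S)"
proof -
  define A where "A = {g. P g u \<noteq> 0}"
  have "finite A" and u: "u = (\<Sum>g\<in>A. P g u)"
    using graded_vs_decomp unfolding A_def by blast+
  have "((\<lambda>t. \<Sum>g\<in>A. F (P g u) t) has_vector_derivative (\<Sum>g\<in>A. G (P g u))) (at 0 within S)"
    by (rule has_vector_derivative_sum) (rule hom)
  moreover have "G u = (\<Sum>g\<in>A. G (P g u))"
    by (subst u) (rule additive.sum[OF additive.intro[OF add]])
  ultimately have "((\<lambda>t. \<Sum>g\<in>A. F (P g u) t) has_vector_derivative G u) (at 0 within S)"
    by simp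
  then show ?thesis
  proof (rule has_vector_derivative_transform_within[OF _ d S])
    fix t assume "t \<in> S" "dist t 0 < d"
    then show "(\<Sum>g\<in>A. F (P g u) t) = F u t"
      by (subst (2) u) (simp add: linear_map_sum[OF lin])
  qed
qed

end

lemma in_cpl_emb: "in_cpl P (emb P v)"
  by (simp add: in_cpl_def emb_def)

lemma in_cpl_funpow:
  "(\<And>f. in_cpl P f \<Longrightarrow> in_cpl P (T f)) \<Longrightarrow> in_cpl P f \<Longrightarrow> in_cpl P ((T ^^ k) f)"
  by (induction k) auto

lemma in_cpl_extO:
  assumes "\<And>n v. D (P n v) \<in> range (P (n + 1))" and "in_cpl P f"
  shows "in_cpl P (extO D f)"
  unfolding in_cpl_def extO_def
proof
  fix n
  from assms(2) obtain x where "f (n - 1) = P (n - 1) x"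
    unfolding in_cpl_def by blast
  with assms(1)[of "n - 1" x] show "D (f (n - 1)) \<in> range (P n)"
    by simp
qed

lemma in_cpl_extL:
  assumes "\<And>p q v. D (P (p, q) v) \<in> range (P (p + 1, q))" and "in_cpl P f"
  shows "in_cpl P (extL D f)"
  unfolding in_cpl_def extL_def
proof (clarify)
  fix p q
  from assms(2) obtain x where "f (p - 1, q) = P (p - 1, q) x"
    unfolding in_cpl_def by blast
  with assms(1)[of "p - 1" q x] show "D (f (p - 1, q)) \<in> range (P (p, q))"
    by simp
qed

lemma in_cpl_extR:
  assumes "\<And>p q v. D (P (p, q) v) \<in> range (P (p, q + 1))" and "in_cpl P f"
  shows "in_cpl P (extR D f)"
  unfolding in_cpl_def extR_def
proof (clarify)
  fix p q
  from assms(2) obtain x where "f (p, q - 1) = P (p, q - 1) x"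
    unfolding in_cpl_def by blast
  with assms(1)[of p "q - 1" x] show "D (f (p, q - 1)) \<in> range (P (p, q))"
    by simp
qed

lemma extO_funpow: "((extO D ^^ k) f) n = (D ^^ k) (f (n - real k))"
  by (induction k arbitrary: n) (simp_all add: extO_def diff_diff_eq add.commute)

lemma extL_funpow: "((extL D ^^ k) f) (p, q) = (D ^^ k) (f (p - real k, q))"
  by (induction k arbitrary: p) (simp_all add: extL_def diff_diff_eq add.commute)

lemma extR_funpow: "((extR D ^^ k) f) (p, q) = (D ^^ k) (f (p, q - real k))"
  by (induction k arbitrary: q) (simp_all add: extR_def diff_diff_eq add.commute)

section \<open>Open-closed field algebras\<close>

locale open_closed_algebra =
  fixes sc :: "complex \<Rightarrow> 'c::ab_group_add \<Rightarrow> 'c" and Pc :: "real \<times> real \<Rightarrow> 'c \<Rightarrow> 'c"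
    and DL DR :: "'c \<Rightarrow> 'c" and mcl :: "'c list \<Rightarrow> complex list \<Rightarrow> real \<times> real \<Rightarrow> 'c"
    and so :: "complex \<Rightarrow> 'o::ab_group_add \<Rightarrow> 'o" and Po :: "real \<Rightarrow> 'o \<Rightarrow> 'o"
    and D :: "'o \<Rightarrow> 'o" and m :: "'c list \<Rightarrow> 'o list \<Rightarrow> complex list \<Rightarrow> real list \<Rightarrow> real \<Rightarrow> 'o"
  assumes oc: "open_closed_field_algebra sc Pc DL DR mcl so Po D m"
begin

lemma MH_singleton [simp]: "[z] \<in> MH (Suc 0) \<longleftrightarrow> Im z > 0"
  by (simp add: MH_def Mc_def)

lemma Lam_singleton [simp]: "[r] \<in> Lam (Suc 0) \<longleftrightarrow> r \<ge> 0"
  by (simp add: Lam_def)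

lemma MH_Nil [simp]: "[] \<in> MH 0"
  and Mc_singleton [simp]: "[w] \<in> Mc (Suc 0)"
  by (simp_all add: MH_def Mc_def)

lemma closed_axioms: "full_field_algebra sc Pc DL DR mcl"
  using oc unfolding open_closed_field_algebra_def by blast

lemma graded_closed: "graded_vs sc Pc"
  and linear_DL: "Vector_Spaces.linear sc sc DL"
  and linear_DR: "Vector_Spaces.linear sc sc DR"
  and DL_weight: "DL (Pc (p, q) x) \<in> range (Pc (p + 1, q))"
  and DR_weight: "DR (Pc (p, q) x) \<in> range (Pc (p, q + 1))"
  and mcl_in_completion: "in_cpl Pc (mcl [u] [w])"
  and mcl_identity: "mcl [u] [0] = emb Pc u"
  using closed_axioms unfolding full_field_algebra_def by simp_all

lemma mcl_translation:
  assumes "rdual sc Pc \<phi>"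
  shows "((\<lambda>(k, l). w ^ k * cnj w ^ l / (fact k * fact l) *
            pair Pc \<phi> ((extL DL ^^ k) ((extR DR ^^ l) (mcl [u] [0])))) has_sum pair Pc \<phi> (mcl [u] [w])) UNIV"
proof -
  have "\<forall>a::complex. \<forall>us zs \<phi>. zs \<in> Mc (length us) \<longrightarrow> rdual sc Pc \<phi> \<longrightarrow>
     ((\<lambda>(k, l). a ^ k * cnj a ^ l / (fact k * fact l) *
          pair Pc \<phi> ((extL DL ^^ k) ((extR DR ^^ l) (mcl us zs)))) has_sum
       pair Pc \<phi> (mcl us (map (\<lambda>z. z + a) zs))) UNIV"
    using closed_axioms unfolding full_field_algebra_def by (elim conjE) assumption
  from this[rule_format, of "[0]" "[u]" \<phi> w] assms show ?thesis
    by simp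
qed

lemma graded_open: "graded_vs so Po"
  and linear_D: "Vector_Spaces.linear so so D"
  and D_weight: "D (Po n x) \<in> range (Po (n + 1))"
  and m_identity: "m [] [v] [] [0] = emb Po v"
  using oc unfolding open_closed_field_algebra_def by simp_all

lemma m_in_completion: "zs \<in> MH (length us) \<Longrightarrow> rs \<in> Lam (length vs) \<Longrightarrow> in_cpl Po (m us vs zs rs)"
  using oc unfolding open_closed_field_algebra_def by (elim conjE) fast

lemma m_linear_closed_arg:
  assumes "Im z > 0" "r \<ge> 0"
  shows "Vector_Spaces.linear sc so (\<lambda>x. m [x] [v] [z] [r] n)"
proof -
  have "[z] \<in> MH (length [u::'c])" "[r] \<in> Lam (length [v])" "0 < length [u::'c]" "0 < length [v]"
    using assms by simp_all
  with oc have "Vector_Spaces.linear sc so (\<lambda>x. m ([u::'c][0 := x]) [v] [z] [r] n)"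
    unfolding open_closed_field_algebra_def by (elim conjE) fast
  then show ?thesis by simp
qed

lemma m_linear_open_arg:
  assumes "Im z > 0" "r \<ge> 0"
  shows "Vector_Spaces.linear so so (\<lambda>x. m [u] [x] [z] [r] n)"
proof -
  have "[z] \<in> MH (length [u])" "[r] \<in> Lam (length [v::'o])" "0 < length [u]" "0 < length [v::'o]"
    using assms by simp_all
  with oc have "Vector_Spaces.linear so so (\<lambda>x. m [u] ([v::'o][0 := x]) [z] [r] n)"
    unfolding open_closed_field_algebra_def by (elim conjE) fast
  then show ?thesis by simp
qed

lemma m_translation:
  assumes "zs \<in> MH (length us)" and "0 \<le> a" and "rdual so Po \<phi>"
  shows "((\<lambda>k. of_real (a ^ k / fact k) * pair Po \<phi> ((extO D ^^ k) (m us [v] zs [0]))) has_sum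
           pair Po \<phi> (m us [v] (map (\<lambda>z. z + of_real a) zs) [a])) UNIV"
proof -
  have "\<forall>a::real. \<forall>us vs zs rs \<phi>. zs \<in> MH (length us) \<longrightarrow> rs \<in> Lam (length vs) \<longrightarrow>
          (rs = [] \<or> last rs + a \<ge> 0) \<longrightarrow> rdual so Po \<phi> \<longrightarrow>
          ((\<lambda>k. of_real (a ^ k / fact k) * pair Po \<phi> ((extO D ^^ k) (m us vs zs rs))) has_sum
             pair Po \<phi> (m us vs (map (\<lambda>z. z + of_real a) zs) (map (\<lambda>r. r + a) rs))) UNIV"
    using oc unfolding open_closed_field_algebra_def by (elim conjE) assumption
  from this[rule_format, of zs us "[0]" "[v]" a \<phi>] assms show ?thesis
    by simp
qed

lemma mcl_translate_component:
  assumes \<psi>: "Vector_Spaces.linear sc (*) \<psi>"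
  shows "((\<lambda>(k, l). w ^ k * cnj w ^ l / (fact k * fact l) *
            \<psi> ((DL ^^ k) ((DR ^^ l) (Pc (fst g - real k, snd g - real l) u)))) has_sum
          \<psi> (mcl [u] [w] g)) UNIV"
proof -
  obtain p q where g: "g = (p, q)" by fastforce
  have "in_cpl Pc ((extL DL ^^ k) ((extR DR ^^ l) (mcl [u] [0])))" for k l
    unfolding mcl_identity
    by (intro in_cpl_funpow[of _ "extL DL"] in_cpl_funpow[of _ "extR DR"] in_cpl_extL in_cpl_extR
        DL_weight DR_weight in_cpl_emb)
  with mcl_translation[OF rdual_proj_comp[OF graded_closed \<psi>, of g], of w u] show ?thesis
    by (simp add: pair_proj_comp[OF graded_closed \<psi>] mcl_in_completion mcl_identity
        extL_funpow extR_funpow emb_def g)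
qed

lemma m_translate_component:
  assumes "0 \<le> s" and \<psi>: "Vector_Spaces.linear so (*) \<psi>"
  shows "((\<lambda>k. of_real (s ^ k / fact k) * \<psi> ((D ^^ k) (Po (n - real k) v))) has_sum
          \<psi> (m [] [v] [] [s] n)) UNIV"
proof -
  have "in_cpl Po ((extO D ^^ k) (m [] [v] [] [0]))" for k
    unfolding m_identity by (intro in_cpl_funpow[of _ "extO D"] in_cpl_extO D_weight in_cpl_emb)
  with m_translation[of "[]" "[]" s "\<lambda>x. \<psi> (Po n x)" v] assms show ?thesis
    by (simp add: rdual_proj_comp[OF graded_open \<psi>] pair_proj_comp[OF graded_open \<psi>]
        m_in_completion m_identity extO_funpow emb_def)
qed

lemma mcl_translate_homogeneous:
  assumes u: "u \<in> range (Pc h)" and \<psi>: "Vector_Spaces.linear sc (*) \<psi>"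
    and sum: "((\<lambda>g. \<psi> (mcl [u] [w] g)) has_sum X) UNIV"
  shows "((\<lambda>(k, l). w ^ k * cnj w ^ l / (fact k * fact l) * \<psi> ((DL ^^ k) ((DR ^^ l) u))) has_sum X) UNIV"
proof -
  define j where "j = (\<lambda>(k::nat, l::nat). (fst h + real k, snd h + real l))"
  define c where "c g = (\<lambda>(k, l). w ^ k * cnj w ^ l / (fact k * fact l) *
                     \<psi> ((DL ^^ k) ((DR ^^ l) (Pc (fst g - real k, snd g - real l) u))))" for g
  have "Pc (fst g - real k, snd g - real l) u = (if g = j (k, l) then u else 0)" for g k l
    using proj_homogeneous[OF graded_closed u] by (cases g, cases h) (auto simp: j_def)
  then have c: "c g (k, l) = (if g = j (k, l) then w ^ k * cnj w ^ l / (fact k * fact l) *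
                                  \<psi> ((DL ^^ k) ((DR ^^ l) u)) else 0)" for g k l
    by (simp add: c_def linear_map_funpow_zero[OF linear_DL] linear_map_funpow_zero[OF linear_DR]
        linear_map_zero[OF \<psi>])
  have series: "(c g has_sum \<psi> (mcl [u] [w] g)) UNIV" for g
    unfolding c_def by (rule mcl_translate_component[OF \<psi>])
  have single: "c g i = 0" if "g \<noteq> j i" for g i
    using that c by (cases i) simp
  have "inj j"
    by (auto simp: j_def inj_def)
  from has_sum_reindex_single_support[OF this series single sum]
  show ?thesis
    by (rule has_sum_cong[THEN iffD1, rotated]) (auto simp: c)
qed

lemma m_translate_homogeneous:
  assumes v: "v \<in> range (Po h)" and "0 \<le> s" and \<psi>: "Vector_Spaces.linear so (*) \<psi>"
    and sum: "((\<lambda>n. \<psi> (m [] [v] [] [s] n)) has_sum X) UNIV"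
  shows "((\<lambda>k. of_real (s ^ k / fact k) * \<psi> ((D ^^ k) v)) has_sum X) UNIV"
proof -
  define c where "c n k = of_real (s ^ k / fact k) * \<psi> ((D ^^ k) (Po (n - real k) v))" for n k
  have c: "c n k = (if n = h + real k then of_real (s ^ k / fact k) * \<psi> ((D ^^ k) v) else 0)" for n k
    using proj_homogeneous[OF graded_open v, of "n - real k"]
    by (auto simp: c_def linear_map_funpow_zero[OF linear_D] linear_map_zero[OF \<psi>])
  have series: "(c n has_sum \<psi> (m [] [v] [] [s] n)) UNIV" for n
    unfolding c_def using m_translate_component[OF \<open>0 \<le> s\<close> \<psi>] .
  have single: "c n k = 0" if "n \<noteq> h + real k" for n k
    using that c by simp
  have "inj (\<lambda>k::nat. h + real k)"
    by (auto simp: inj_def)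
  from has_sum_reindex_single_support[OF this series single sum]
  show ?thesis
    by (simp add: c)
qed

lemma linear_pair_closed_arg:
  assumes "rdual so Po \<phi>" and "Im z > 0" and "0 \<le> r"
  shows "Vector_Spaces.linear sc (*) (\<lambda>x. pair Po \<phi> (m [x] [v] [z] [r]))"
  using assms m_linear_closed_arg by (intro linear_pair) auto

lemma linear_pair_open_arg:
  assumes "rdual so Po \<phi>" and "Im z > 0" and "0 \<le> r"
  shows "Vector_Spaces.linear so (*) (\<lambda>x. pair Po \<phi> (m [u] [x] [z] [r]))"
  using assms m_linear_open_arg by (intro linear_pair) auto

lemma m_closed_assoc:
  assumes z: "Im z > 0" and w: "cmod w < Im z" and \<phi>: "rdual so Po \<phi>"
  shows "((\<lambda>g. pair Po \<phi> (m [mcl [u] [w] g] [v] [z] [0])) has_sum pair Po \<phi> (m [u] [v] [z + w] [0])) UNIV"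
proof -
  have assoc: "\<forall>us vs zs rs us' ws i \<phi>. zs \<in> MH (length us) \<longrightarrow> rs \<in> Lam (length vs) \<longrightarrow>
          ws \<in> Mc (length us') \<longrightarrow> i < length us \<longrightarrow>
          (\<forall>j<length zs. j \<noteq> i \<longrightarrow> (\<forall>w\<in>set ws. cmod w < cmod (zs ! j - zs ! i))) \<longrightarrow>
          (\<forall>r\<in>set rs. \<forall>w\<in>set ws. cmod w < cmod (of_real r - zs ! i)) \<longrightarrow>
          (\<forall>w\<in>set ws. Im (zs ! i + w) > 0) \<longrightarrow> rdual so Po \<phi> \<longrightarrow>
          ((\<lambda>pq. pair Po \<phi> (m (us[i := mcl us' ws pq]) vs zs rs)) has_sum
             pair Po \<phi> (m (take i us @ us' @ drop (Suc i) us) vs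
                            (take i zs @ map (\<lambda>w. zs ! i + w) ws @ drop (Suc i) zs) rs)) UNIV"
    using oc unfolding open_closed_field_algebra_def by (elim conjE) assumption
  have "cmod w < cmod (0 - z)"
    using w abs_Im_le_cmod[of z] by simp
  moreover have "Im (z + w) > 0"
    using w abs_Im_le_cmod[of w] by simp
  ultimately show ?thesis
    using assoc[rule_format, of "[z]" "[u]" "[0]" "[v]" "[w]" "[u]" 0 \<phi>] z \<phi> by simp
qed

lemma m_open_assoc:
  assumes z: "Im z > 0" and s: "0 \<le> s" "s < cmod z" and \<phi>: "rdual so Po \<phi>"
  shows "((\<lambda>n. pair Po \<phi> (m [u] [m [] [v] [] [s] n] [z] [0])) has_sum pair Po \<phi> (m [u] [v] [z] [s])) UNIV"
proof -
  have "\<forall>us vs zs rs us' vs' ws ss i \<phi>. zs \<in> MH (length us) \<longrightarrow> rs \<in> Lam (length vs) \<longrightarrow>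
          ws \<in> MH (length us') \<longrightarrow> ss \<in> Lam (length vs') \<longrightarrow> i < length vs \<longrightarrow>
          (\<forall>z\<in>set zs. (\<forall>w\<in>set ws. cmod w < cmod (z - of_real (rs ! i))) \<and>
                      (\<forall>s\<in>set ss. s < cmod (z - of_real (rs ! i)))) \<longrightarrow>
          (\<forall>t<length rs. t \<noteq> i \<longrightarrow> (\<forall>w\<in>set ws. cmod w < \<bar>rs ! t - rs ! i\<bar>) \<and>
                                     (\<forall>s\<in>set ss. s < \<bar>rs ! t - rs ! i\<bar>)) \<longrightarrow>
          rdual so Po \<phi> \<longrightarrow>
          ((\<lambda>n. pair Po \<phi> (m us (vs[i := m us' vs' ws ss n]) zs rs)) has_sum
             pair Po \<phi> (m (us @ us') (take i vs @ vs' @ drop (Suc i) vs)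
                            (zs @ map (\<lambda>w. of_real (rs ! i) + w) ws)
                            (take i rs @ map (\<lambda>s. rs ! i + s) ss @ drop (Suc i) rs))) UNIV"
    using oc unfolding open_closed_field_algebra_def by (elim conjE) assumption
  from this[rule_format, of "[z]" "[u]" "[0]" "[v]" "[]" "[]" "[s]" "[v]" 0 \<phi>] assms
  show ?thesis
    by simp
qed

lemma m_closed_Taylor_series:
  assumes u: "u \<in> range (Pc h)" and \<phi>: "rdual so Po \<phi>" and z: "Im z > 0" and w: "cmod w < Im z"
  shows "((\<lambda>(k, l). w ^ k * cnj w ^ l / (fact k * fact l) * pair Po \<phi> (m [(DL ^^ k) ((DR ^^ l) u)] [v] [z] [0]))
           has_sum pair Po \<phi> (m [u] [v] [z + w] [0])) UNIV"
  by (rule mcl_translate_homogeneous[OF u linear_pair_closed_arg[OF \<phi> z] m_closed_assoc[OF z w \<phi>]]) simp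

lemma m_open_Taylor_series:
  assumes v: "v \<in> range (Po h)" and \<phi>: "rdual so Po \<phi>" and z: "Im z > 0" and s: "0 \<le> s" "s < cmod z"
  shows "((\<lambda>k. of_real (s ^ k / fact k) * pair Po \<phi> (m [u] [(D ^^ k) v] [z] [0]))
           has_sum pair Po \<phi> (m [u] [v] [z] [s])) UNIV"
  by (rule m_translate_homogeneous[OF v s(1) linear_pair_open_arg[OF \<phi> z] m_open_assoc[OF z s \<phi>]]) simp

lemma m_directional_derivative_homogeneous:
  assumes u: "u \<in> range (Pc h)" and \<phi>: "rdual so Po \<phi>" and z: "Im z > 0" and e: "cmod e = 1"
  shows "((\<lambda>t. pair Po \<phi> (m [u] [v] [z + e * of_real t] [0])) has_vector_derivative
           e * pair Po \<phi> (m [DL u] [v] [z] [0]) + cnj e * pair Po \<phi> (m [DR u] [v] [z] [0])) (at 0)"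
proof -
  define a where "a k l = e ^ k * cnj e ^ l / (fact k * fact l) *
                            pair Po \<phi> (m [(DL ^^ k) ((DR ^^ l) u)] [v] [z] [0])" for k l
  have "((\<lambda>t. pair Po \<phi> (m [u] [v] [z + e * of_real t] [0])) has_vector_derivative a 1 0 + a 0 1) (at 0)"
  proof (rule has_vector_derivative_double_power_series[OF z])
    fix t :: real assume "\<bar>t\<bar> < Im z"
    then have "cmod (e * of_real t) < Im z"
      using e by (simp add: norm_mult)
    from m_closed_Taylor_series[OF u \<phi> z this, of v]
    show "((\<lambda>(k, l). a k l * of_real t ^ (k + l)) has_sum pair Po \<phi> (m [u] [v] [z + e * of_real t] [0])) UNIV"
      by (simp add: a_def power_mult_distrib power_add field_simps case_prod_unfold)
  qed
  then show ?thesis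
    by (simp add: a_def)
qed

lemma m_directional_derivative:
  assumes \<phi>: "rdual so Po \<phi>" and z: "Im z > 0" and e: "cmod e = 1"
  shows "((\<lambda>t. pair Po \<phi> (m [u] [v] [z + e * of_real t] [0])) has_vector_derivative
           e * pair Po \<phi> (m [DL u] [v] [z] [0]) + cnj e * pair Po \<phi> (m [DR u] [v] [z] [0])) (at 0)"
proof (rule has_vector_derivative_by_homogeneous_components[OF graded_closed z, of UNIV,
          where F = "\<lambda>x t. pair Po \<phi> (m [x] [v] [z + e * of_real t] [0])", simplified])
  fix t :: real assume "\<bar>t\<bar> < Im z"
  then have "\<bar>Im (e * of_real t)\<bar> < Im z"
    using abs_Im_le_cmod[of "e * of_real t"] e by (simp add: norm_mult)
  then show "Vector_Spaces.linear sc (*) (\<lambda>x. pair Po \<phi> (m [x] [v] [z + e * of_real t] [0]))"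
    by (intro linear_pair_closed_arg[OF \<phi>]) auto
next
  fix x y
  show "e * pair Po \<phi> (m [DL (x + y)] [v] [z] [0]) + cnj e * pair Po \<phi> (m [DR (x + y)] [v] [z] [0]) =
        e * pair Po \<phi> (m [DL x] [v] [z] [0]) + cnj e * pair Po \<phi> (m [DR x] [v] [z] [0]) +
        (e * pair Po \<phi> (m [DL y] [v] [z] [0]) + cnj e * pair Po \<phi> (m [DR y] [v] [z] [0]))"
    by (simp add: linear_map_add[OF linear_DL] linear_map_add[OF linear_DR]
        linear_map_add[OF linear_pair_closed_arg[OF \<phi> z]] algebra_simps)
qed (rule m_directional_derivative_homogeneous[OF rangeI \<phi> z e])

lemma m_open_derivative:
  assumes \<phi>: "rdual so Po \<phi>" and z: "Im z > 0"
  shows "((\<lambda>s. pair Po \<phi> (m [u] [v] [z] [s])) has_vector_derivative pair Po \<phi> (m [u] [D v] [z] [0]))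
           (at 0 within {0..})"
proof (rule has_vector_derivative_by_homogeneous_components[OF graded_open, of "cmod z",
          where F = "\<lambda>x s. pair Po \<phi> (m [u] [x] [z] [s])"])
  show "cmod z > 0"
    using z by auto
  fix s :: real assume "s \<in> {0..}"
  then show "Vector_Spaces.linear so (*) (\<lambda>x. pair Po \<phi> (m [u] [x] [z] [s]))"
    by (intro linear_pair_open_arg[OF \<phi> z]) simp
next
  fix g
  define c where "c k = pair Po \<phi> (m [u] [(D ^^ k) (Po g v)] [z] [0]) / fact k" for k
  have "((\<lambda>s. pair Po \<phi> (m [u] [Po g v] [z] [s])) has_vector_derivative c 1) (at 0 within {0..})"
  proof (rule has_vector_derivative_power_series[of "cmod z"])
    fix t :: real assume "t \<in> {0..}" "\<bar>t\<bar> < cmod z"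
    with m_open_Taylor_series[OF rangeI \<phi> z, of t u g v]
    show "((\<lambda>k. c k * of_real t ^ k) has_sum pair Po \<phi> (m [u] [Po g v] [z] [t])) UNIV"
      by (simp add: c_def mult.commute)
  qed (use z in auto)
  then show "((\<lambda>s. pair Po \<phi> (m [u] [Po g v] [z] [s])) has_vector_derivative
          pair Po \<phi> (m [u] [D (Po g v)] [z] [0])) (at 0 within {0..})"
    by (simp add: c_def)
qed (auto simp: linear_map_add[OF linear_D] linear_map_add[OF linear_pair_open_arg[OF \<phi> z]])

lemma m_translation_derivative:
  assumes \<phi>: "rdual so Po \<phi>" and z: "Im z > 0"
  shows "((\<lambda>a. pair Po \<phi> (m [u] [v] [z + of_real a] [a])) has_vector_derivative
           pair Po \<phi> (extO D (m [u] [v] [z] [0]))) (at 0 within {0..})"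
proof -
  define c where "c k = pair Po \<phi> ((extO D ^^ k) (m [u] [v] [z] [0])) / fact k" for k
  have "((\<lambda>a. pair Po \<phi> (m [u] [v] [z + of_real a] [a])) has_vector_derivative c 1) (at 0 within {0..})"
  proof (rule has_vector_derivative_power_series[of 1])
    fix t :: real assume "t \<in> {0..}"
    with m_translation[of "[z]" "[u]" t \<phi> v] z \<phi>
    show "((\<lambda>k. c k * of_real t ^ k) has_sum pair Po \<phi> (m [u] [v] [z + of_real t] [t])) UNIV"
      by (simp add: c_def mult.commute)
  qed auto
  then show ?thesis
    by (simp add: c_def)
qed

lemma m_partial_derivative_Re:
  assumes \<phi>: "rdual so Po \<phi>"
  obtains g' where
    "\<And>x y r. 0 < y \<Longrightarrow> 0 \<le> r \<Longrightarrow>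
       ((\<lambda>t. pair Po \<phi> (m [u] [v] [Complex (x + t) y] [r])) has_vector_derivative g' x y r) (at 0)"
    "\<And>x y e. 0 < y \<Longrightarrow> 0 < e \<Longrightarrow> \<exists>d>0. \<forall>x' y' r. 0 < y' \<longrightarrow> 0 \<le> r \<longrightarrow>
       \<bar>x' - x\<bar> < d \<longrightarrow> \<bar>y' - y\<bar> < d \<longrightarrow> r < d \<longrightarrow> cmod (g' x' y' r - g' x y 0) < e"
proof -
  define S where "S = {coords zs @ rs | zs rs. zs \<in> MH (length [u]) \<and> rs \<in> Lam (length [v])}"
  define f where "f xs = pair Po \<phi> (m [u] [v] (decode (take (2 * length [u]) xs)) (drop (2 * length [u]) xs))"
    for xs
  have "\<forall>us vs \<phi>. rdual so Po \<phi> \<longrightarrow>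
          smooth {coords zs @ rs | zs rs. zs \<in> MH (length us) \<and> rs \<in> Lam (length vs)}
            (\<lambda>xs. pair Po \<phi> (m us vs (decode (take (2 * length us) xs)) (drop (2 * length us) xs)))"
    using oc unfolding open_closed_field_algebra_def by (elim conjE) assumption
  with \<phi> have "Ck (Suc 0) S f"
    unfolding S_def f_def smooth_def by blast
  then have cont: "lcont S (pdir S 0 f)"
    and diff: "\<And>xs. xs \<in> S \<Longrightarrow> \<forall>j<length xs. (\<lambda>t. f (xs[j := xs ! j + t])) differentiable
                  (at 0 within {t. xs[j := xs ! j + t] \<in> S})"
    by auto
  have S: "[x, y, r] \<in> S" if "0 < y" "0 \<le> r" for x y r
  proof -
    have "[x, y, r] = coords [Complex x y] @ [r]"
      by (simp add: coords_def)
    with that show ?thesis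
      unfolding S_def by fastforce
  qed
  have f: "f [x, y, r] = pair Po \<phi> (m [u] [v] [Complex x y] [r])" for x y r
    by (simp add: f_def decode_def)
  show thesis
  proof (rule that[of "\<lambda>x y r. pdir S 0 f [x, y, r]"])
    fix x y r :: real assume "0 < y" "0 \<le> r"
    then have full: "{t. [x + t, y, r] \<in> S} = UNIV"
      using S by auto
    from diff[OF S[OF \<open>0 < y\<close> \<open>0 \<le> r\<close>, of x], rule_format, of 0]
    have "(\<lambda>t. f [x + t, y, r]) differentiable at 0"
      by (simp add: full)
    then show "((\<lambda>t. pair Po \<phi> (m [u] [v] [Complex (x + t) y] [r])) has_vector_derivative
                  pdir S 0 f [x, y, r]) (at 0)"
      by (simp add: vector_derivative_works pdir_def f full)
  next
    fix x y e :: real assume "0 < y" "0 < e"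
    with cont S obtain d where "d > 0" and d: "\<And>ys. ys \<in> S \<Longrightarrow> length ys = 3 \<Longrightarrow>
        (\<forall>j<3. \<bar>ys ! j - [x, y, 0] ! j\<bar> < d) \<Longrightarrow> cmod (pdir S 0 f ys - pdir S 0 f [x, y, 0]) < e"
      unfolding lcont_def by (metis length_Cons list.size(3) numeral_3_eq_3 order_refl)
    show "\<exists>d>0. \<forall>x' y' r. 0 < y' \<longrightarrow> 0 \<le> r \<longrightarrow> \<bar>x' - x\<bar> < d \<longrightarrow> \<bar>y' - y\<bar> < d \<longrightarrow> r < d \<longrightarrow>
            cmod (pdir S 0 f [x', y', r] - pdir S 0 f [x, y, 0]) < e"
      using \<open>d > 0\<close> S by (auto intro!: exI[of _ d] d simp: numeral_3_eq_3 less_Suc_eq)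
  qed
qed

lemma m_diagonal_derivative:
  assumes \<phi>: "rdual so Po \<phi>" and z: "Im z > 0"
  shows "((\<lambda>a. pair Po \<phi> (m [u] [v] [z + of_real a] [a]) - pair Po \<phi> (m [u] [v] [z] [a])) has_vector_derivative
           pair Po \<phi> (m [DL u] [v] [z] [0]) + pair Po \<phi> (m [DR u] [v] [z] [0])) (at 0 within {0..})"
proof -
  obtain g' where deriv: "\<And>x y r. 0 < y \<Longrightarrow> 0 \<le> r \<Longrightarrow>
       ((\<lambda>t. pair Po \<phi> (m [u] [v] [Complex (x + t) y] [r])) has_vector_derivative g' x y r) (at 0)"
    and cont: "\<And>x y e. 0 < y \<Longrightarrow> 0 < e \<Longrightarrow> \<exists>d>0. \<forall>x' y' r. 0 < y' \<longrightarrow> 0 \<le> r \<longrightarrow>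
       \<bar>x' - x\<bar> < d \<longrightarrow> \<bar>y' - y\<bar> < d \<longrightarrow> r < d \<longrightarrow> cmod (g' x' y' r - g' x y 0) < e"
    using m_partial_derivative_Re[OF \<phi>] by blast
  have z_shift: "Complex (Re z + t) (Im z) = z + of_real t" for t
    by (simp add: complex_eq_iff)
  have "((\<lambda>a. pair Po \<phi> (m [u] [v] [Complex (Re z + a) (Im z)] [a]) -
              pair Po \<phi> (m [u] [v] [Complex (Re z) (Im z)] [a])) has_vector_derivative
          g' (Re z) (Im z) 0) (at 0 within {0..})"
  proof (rule has_vector_derivative_diagonal_increment[where g' = "\<lambda>x r. g' x (Im z) r"])
    fix e :: real assume "e > 0"
    with cont[OF z] show "\<exists>d>0. \<forall>x r. 0 \<le> r \<longrightarrow> \<bar>x - Re z\<bar> < d \<longrightarrow> r < d \<longrightarrow>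
        cmod (g' x (Im z) r - g' (Re z) (Im z) 0) \<le> e"
      by (metis less_eq_real_def z diff_self abs_zero)
  qed (rule deriv[OF z])
  moreover have "((\<lambda>t. pair Po \<phi> (m [u] [v] [z + 1 * of_real t] [0])) has_vector_derivative
                    g' (Re z) (Im z) 0) (at 0)"
    using deriv[OF z order_refl, of "Re z"] by (simp add: z_shift)
  from vector_derivative_unique_at[OF this m_directional_derivative[OF \<phi> z, of 1 u v]]
  have "g' (Re z) (Im z) 0 = pair Po \<phi> (m [DL u] [v] [z] [0]) + pair Po \<phi> (m [DR u] [v] [z] [0])"
    by simp
  ultimately show ?thesis
    by (simp add: z_shift)
qed

lemma pair_D_commutator:
  assumes \<phi>: "rdual so Po \<phi>" and z: "Im z > 0"
  shows "pair Po \<phi> (extO D (m [u] [v] [z] [0])) =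
           pair Po \<phi> (m [DL u] [v] [z] [0]) + pair Po \<phi> (m [DR u] [v] [z] [0]) + pair Po \<phi> (m [u] [D v] [z] [0])"
proof -
  have "at (0::real) within {0..} \<noteq> bot"
    by (simp add: at_within_Ici_at_right)
  from vector_derivative_unique_within[OF this m_diagonal_derivative[OF \<phi> z]
      has_vector_derivative_diff[OF m_translation_derivative[OF \<phi> z] m_open_derivative[OF \<phi> z]]]
  show ?thesis
    by (simp add: algebra_simps)
qed

lemma Ycl_op_D_commutator:
  assumes z: "Im z > 0"
  shows "(\<lambda>n. extO D (Ycl_op m u z v) n - Ycl_op m u z (D v) n) = Ycl_op m (DL u + DR u) z v"
proof
  fix n
  have "extO D (m [u] [v] [z] [0]) n = m [DL u] [v] [z] [0] n + m [DR u] [v] [z] [0] n + m [u] [D v] [z] [0] n"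
  proof (rule eq_if_linear_functionals_eq[OF graded_vs_vector_space[OF graded_open]])
    fix \<psi> assume \<psi>: "Vector_Spaces.linear so (*) \<psi>"
    have "in_cpl Po (m [x] [y] [z] [0])" for x y
      using z by (intro m_in_completion) auto
    with pair_D_commutator[OF rdual_proj_comp[OF graded_open \<psi>] z]
    show "\<psi> (extO D (m [u] [v] [z] [0]) n) =
            \<psi> (m [DL u] [v] [z] [0] n + m [DR u] [v] [z] [0] n + m [u] [D v] [z] [0] n)"
      by (simp add: pair_proj_comp[OF graded_open \<psi>] in_cpl_extO[of D Po, OF D_weight]
          linear_map_add[OF \<psi>])
  qed
  then show "extO D (Ycl_op m u z v) n - Ycl_op m u z (D v) n = Ycl_op m (DL u + DR u) z v n"
    using linear_map_add[OF m_linear_closed_arg[OF z order_refl]] by (simp add: Ycl_op_def)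
qed

lemma Ycl_op_derivative_Re:
  assumes "rdual so Po \<phi>" and "Im z > 0"
  shows "((\<lambda>t. pair Po \<phi> (Ycl_op m u (z + of_real t) v)) has_vector_derivative
           pair Po \<phi> (Ycl_op m (DL u) z v) + pair Po \<phi> (Ycl_op m (DR u) z v)) (at 0)"
  using m_directional_derivative[OF assms, of 1 u v] by (simp add: Ycl_op_def)

lemma Ycl_op_derivative_Im:
  assumes "rdual so Po \<phi>" and "Im z > 0"
  shows "((\<lambda>t. pair Po \<phi> (Ycl_op m u (z + \<i> * of_real t) v)) has_vector_derivative
           \<i> * pair Po \<phi> (Ycl_op m (DL u) z v) - \<i> * pair Po \<phi> (Ycl_op m (DR u) z v)) (at 0)"
  using m_directional_derivative[OF assms, of \<i> u v] by (simp add: Ycl_op_def)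

end

theorem proposition1p12:
  fixes sc :: "complex \<Rightarrow> 'c::ab_group_add \<Rightarrow> 'c" and Pc :: "real \<times> real \<Rightarrow> 'c \<Rightarrow> 'c"
    and DL DR :: "'c \<Rightarrow> 'c" and mcl :: "'c list \<Rightarrow> complex list \<Rightarrow> real \<times> real \<Rightarrow> 'c"
    and so :: "complex \<Rightarrow> 'o::ab_group_add \<Rightarrow> 'o" and Po :: "real \<Rightarrow> 'o \<Rightarrow> 'o"
    and D :: "'o \<Rightarrow> 'o" and m :: "'c list \<Rightarrow> 'o list \<Rightarrow> complex list \<Rightarrow> real list \<Rightarrow> real \<Rightarrow> 'o"
    and u :: 'c and z :: complex
  assumes "open_closed_field_algebra sc Pc DL DR mcl so Po D m"
    and "Im z > 0"
  shows "(\<forall>v. (\<lambda>n. extO D (Ycl_op m u z v) n - Ycl_op m u z (D v) n) = Ycl_op m (DL u + DR u) z v) \<and>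
         (\<forall>v \<phi>. rdual so Po \<phi> \<longrightarrow>
           (\<exists>px py. ((\<lambda>t::real. pair Po \<phi> (Ycl_op m u (z + of_real t) v)) has_vector_derivative px) (at 0) \<and>
                    ((\<lambda>t::real. pair Po \<phi> (Ycl_op m u (z + \<i> * of_real t) v)) has_vector_derivative py) (at 0) \<and>
                    pair Po \<phi> (Ycl_op m (DL u) z v) = (px - \<i> * py) / 2 \<and>
                    pair Po \<phi> (Ycl_op m (DR u) z v) = (px + \<i> * py) / 2))"
proof -
  interpret open_closed_algebra sc Pc DL DR mcl so Po D m
    by (rule open_closed_algebra.intro) (fact assms(1))
  show ?thesis
    by (intro conjI allI impI Ycl_op_D_commutator[OF assms(2)],
        (rule exI conjI Ycl_op_derivative_Re[OF _ assms(2)] Ycl_op_derivative_Im[OF _ assms(2)], assumption?)+)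
      (simp_all add: field_simps)
qed

end
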